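(* Let $(X,d)$ be an Alexandrov space with curvature bounded below by some $K\in\mathbb{R}$, and let $x_1,x_2,y_1,y_2\in X$ satisfy $$d(x_1,y_1)^2+d(x_2,y_2)^2\le d(x_1,y_2)^2+d(x_2,y_1)^2.$$ Let $\gamma_1,\gamma_2:[0,1]\to X$ be constant-speed minimizing geodesics from $x_1$ to $y_1$ and from $x_2$ to $y_2$, respectively. If $\gamma_1(t_0)=\gamma_2(t_0)$ for some $t_0\in(0,1)$, then $\gamma_1(t)=\gamma_2(t)$ for all $t\in[0,1]$.
   Context: An Alexandrov space with curvature $\geq K$ is a finite-dimensional, complete, locally compact, connected length space in which for every quadruple $(p;a,b,c)$ one has $\tilde\angle_K apb+\tilde\angle_K bpc+\tilde\angle_K cpa\le 2\pi$, where $\tilde\angle_K apb$ denotes the angle at $\bar p$ of the comparison triangle with the same side lengths in the model plane of constant curvature $K$. *)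

theory Defs
  imports "HOL-Analysis.Analysis"
begin

(* Comparison angle at the vertex opposite to side c, for a triangle with sides
   a, b (adjacent to the vertex) and c (opposite), in the model plane of curvature K
   (law of cosines). *)
definition cmp_angle :: "real \<Rightarrow> real \<Rightarrow> real \<Rightarrow> real \<Rightarrow> real" where
  "cmp_angle K a b c =
     (if K = 0 then arccos ((a^2 + b^2 - c^2) / (2 * a * b))
      else if K > 0 then
        arccos ((cos (sqrt K * c) - cos (sqrt K * a) * cos (sqrt K * b))
                / (sin (sqrt K * a) * sin (sqrt K * b)))
      else
        arccos ((cosh (sqrt (-K) * a) * cosh (sqrt (-K) * b) - cosh (sqrt (-K) * c))
                / (sinh (sqrt (-K) * a) * sinh (sqrt (-K) * b))))"

definition cmp_defined :: "real \<Rightarrow> real \<Rightarrow> real \<Rightarrow> real \<Rightarrow> bool" where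
  "cmp_defined K a b c \<longleftrightarrow> a > 0 \<and> b > 0 \<and> (K > 0 \<longrightarrow> a + b + c < 2 * pi / sqrt K)"

definition cangle :: "real \<Rightarrow> 'a::metric_space \<Rightarrow> 'a \<Rightarrow> 'a \<Rightarrow> real" where
  "cangle K a p b = cmp_angle K (dist p a) (dist p b) (dist a b)"

definition cangle_defined :: "real \<Rightarrow> 'a::metric_space \<Rightarrow> 'a \<Rightarrow> 'a \<Rightarrow> bool" where
  "cangle_defined K a p b = cmp_defined K (dist p a) (dist p b) (dist a b)"

definition quadruple_condition :: "real \<Rightarrow> 'a::metric_space set \<Rightarrow> bool" where
  "quadruple_condition K S \<longleftrightarrow>
     (\<forall>p\<in>S. \<forall>a\<in>S. \<forall>b\<in>S. \<forall>c\<in>S.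
        cangle_defined K a p b \<and> cangle_defined K b p c \<and> cangle_defined K c p a \<longrightarrow>
        cangle K a p b + cangle K b p c + cangle K c p a \<le> 2 * pi)"

definition curve_length_le :: "(real \<Rightarrow> 'a::metric_space) \<Rightarrow> real \<Rightarrow> bool" where
  "curve_length_le \<gamma> L \<longleftrightarrow>
     (\<forall>n (t::nat \<Rightarrow> real). t 0 = 0 \<and> t n = 1 \<and> (\<forall>i<n. t i \<le> t (Suc i)) \<longrightarrow>
        (\<Sum>i<n. dist (\<gamma> (t i)) (\<gamma> (t (Suc i)))) \<le> L)"

definition length_space :: "'a::metric_space set \<Rightarrow> bool" where
  "length_space S \<longleftrightarrow>
     (\<forall>x\<in>S. \<forall>y\<in>S. \<forall>\<epsilon>>0. \<exists>\<gamma>. continuous_on {0..1} \<gamma> \<and> \<gamma> ` {0..1} \<subseteq> S \<and>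
        \<gamma> 0 = x \<and> \<gamma> 1 = y \<and> curve_length_le \<gamma> (dist x y + \<epsilon>))"

definition hausdorff_pre :: "real \<Rightarrow> real \<Rightarrow> 'a::metric_space set \<Rightarrow> ennreal" where
  "hausdorff_pre s \<delta> A = Inf {(\<Sum>i. ennreal (diameter (U i) powr s)) | U.
       A \<subseteq> (\<Union>i. U i) \<and> (\<forall>i::nat. bounded (U i) \<and> diameter (U i) \<le> \<delta>)}"

definition hausdorff_measure :: "real \<Rightarrow> 'a::metric_space set \<Rightarrow> ennreal" where
  "hausdorff_measure s A = (SUP \<delta>\<in>{0<..}. hausdorff_pre s \<delta> A)"

definition finite_dimensional :: "'a::metric_space set \<Rightarrow> bool" where
  "finite_dimensional S \<longleftrightarrow> (\<exists>s>0. hausdorff_measure s S = 0)"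

definition alexandrov_space :: "real \<Rightarrow> 'a::metric_space set \<Rightarrow> bool" where
  "alexandrov_space K S \<longleftrightarrow> S \<noteq> {} \<and> finite_dimensional S \<and> complete S \<and> locally compact S \<and>
     connected S \<and> length_space S \<and> quadruple_condition K S"

definition cs_geodesic :: "'a::metric_space set \<Rightarrow> (real \<Rightarrow> 'a) \<Rightarrow> 'a \<Rightarrow> 'a \<Rightarrow> bool" where
  "cs_geodesic S \<gamma> x y \<longleftrightarrow> \<gamma> ` {0..1} \<subseteq> S \<and> \<gamma> 0 = x \<and> \<gamma> 1 = y \<and>
     (\<forall>s\<in>{0..1}. \<forall>t\<in>{0..1}. dist (\<gamma> s) (\<gamma> t) = \<bar>s - t\<bar> * dist x y)"

end

theory Submission imports Defs begin

text \<open>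
Where the two geodesics cross, the triangle inequality through the crossing point together with the
hypothesis forces both geodesics to have the same length and the broken path that follows
\<open>\<gamma>1\<close> up to the crossing and \<open>\<gamma>2\<close> afterwards to be minimizing as well. So if the geodesics
separated right after a common point \<open>p\<close>, the comparison angles at \<open>p\<close> from a point \<open>u\<close> just before
\<open>p\<close> to the two continuations \<open>v\<close>, \<open>w\<close> would both be \<open>\<pi>\<close>, and the quadruple condition leaves
angle \<open>0\<close> between \<open>v\<close> and \<open>w\<close>, i.e. \<open>v = w\<close>. For \<open>K > 0\<close> comparison angles only exist for small
triangles, so the agreement is propagated forward in steps of fixed size; reversing both geodesics
gives the part before the crossing.
\<close>

lemma cmp_angle_straight:
  fixes K h k :: real
  assumes h: "h > 0" and k: "k > 0" and small: "K > 0 \<longrightarrow> sqrt K * h < pi \<and> sqrt K * k < pi"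
  shows "cmp_angle K h k (h + k) = pi"
proof -
  consider "K = 0" | "K > 0" | "K < 0" by linarith
  then show ?thesis
  proof cases
    case 1
    have "(h^2 + k^2 - (h + k)^2) / (2 * h * k) = -1"
      using h k by (simp add: field_simps power2_eq_square)
    then show ?thesis using 1 by (simp add: cmp_angle_def)
  next
    case 2
    define q where "q = sqrt K"
    have sin_pos: "sin (q * h) > 0" "sin (q * k) > 0"
      using small 2 h k by (auto simp: q_def intro!: sin_gt_zero)
    have "cos (q * (h + k)) = cos (q * h) * cos (q * k) - sin (q * h) * sin (q * k)"
      by (simp add: distrib_left cos_add)
    then have "(cos (q * (h + k)) - cos (q * h) * cos (q * k)) / (sin (q * h) * sin (q * k)) = -1"
      using sin_pos by (simp add: field_simps)
    then show ?thesis using 2 by (simp add: cmp_angle_def q_def)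
  next
    case 3
    define q where "q = sqrt (-K)"
    have q: "q > 0" using 3 by (simp add: q_def)
    then have sinh_pos: "sinh (q * h) > 0" "sinh (q * k) > 0" using h k by auto
    have "cosh (q * (h + k)) = cosh (q * h) * cosh (q * k) + sinh (q * h) * sinh (q * k)"
      by (simp add: distrib_left cosh_add)
    then have "(cosh (q * h) * cosh (q * k) - cosh (q * (h + k))) / (sinh (q * h) * sinh (q * k)) = -1"
      using sinh_pos q h k by (simp add: field_simps)
    then show ?thesis using 3 by (simp add: cmp_angle_def q_def)
  qed
qed

lemma arccos_nonpos_imp_eq_1:
  assumes "-1 \<le> r" "r \<le> 1" "arccos r \<le> 0"
  shows "r = 1"
proof -
  have "arccos r = 0" using arccos_lbound[OF assms(1,2)] assms(3) by linarith
  then have "cos (arccos r) = 1" by simp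
  then show ?thesis using assms by simp
qed

lemma cmp_angle_isosceles_nonpos_imp_base_zero:
  fixes K s e :: real
  assumes s: "s > 0" and e: "0 \<le> e" "e \<le> 2 * s" and small: "K > 0 \<longrightarrow> 2 * s * sqrt K < pi"
    and angle: "cmp_angle K s s e \<le> 0"
  shows "e = 0"
proof -
  consider "K = 0" | "K > 0" | "K < 0" by linarith
  then show ?thesis
  proof cases
    case 1
    define r where "r = (s^2 + s^2 - e^2) / (2 * s * s)"
    have "e^2 \<le> (2 * s)^2" using e by (intro power_mono) auto
    then have "-1 \<le> r" "r \<le> 1" using s by (auto simp: r_def field_simps power2_eq_square)
    moreover have "arccos r \<le> 0" using angle 1 by (simp add: cmp_angle_def r_def)
    ultimately have "r = 1" by (rule arccos_nonpos_imp_eq_1)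
    then have "e^2 = 0" using s by (simp add: r_def field_simps power2_eq_square)
    then show ?thesis by simp
  next
    case 2
    define q where "q = sqrt K"
    have q: "q > 0" using 2 by (simp add: q_def)
    have qs: "2 * (q * s) < pi" using small 2 by (simp add: q_def algebra_simps)
    moreover have "q * e \<le> 2 * (q * s)" using mult_left_mono[OF e(2), of q] q by (simp add: algebra_simps)
    ultimately have qe: "q * e < pi" "2 * (q * s) < pi" by linarith+
    have "0 < q * s" using q s by simp
    then have sin_pos: "sin (q * s) > 0" using qe by (intro sin_gt_zero) auto
    have pythagoras: "sin (q * s)^2 + cos (q * s)^2 = 1" by simp
    define r where "r = (cos (q * e) - cos (q * s) * cos (q * s)) / (sin (q * s) * sin (q * s))"
    have "cos (q * e) \<le> 1" by simp
    then have "r \<le> 1" using sin_pos pythagoras by (simp add: r_def field_simps power2_eq_square)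
    moreover have "cos (2 * (q * s)) \<le> cos (q * e)"
      using q e qe mult_left_mono[of e "2 * s" q] by (intro cos_monotone_0_pi_le) auto
    then have "-1 \<le> r"
      using sin_pos unfolding cos_double r_def by (simp add: field_simps power2_eq_square)
    moreover have "arccos r \<le> 0" using angle 2 by (simp add: cmp_angle_def r_def q_def)
    ultimately have "r = 1" using arccos_nonpos_imp_eq_1 by blast
    then have cos_1: "cos (q * e) = 1"
      using sin_pos pythagoras by (simp add: r_def field_simps power2_eq_square)
    show ?thesis
    proof (rule ccontr)
      assume "e \<noteq> 0"
      then have "cos (q * e) < cos 0" using q e qe by (intro cos_monotone_0_pi) auto
      then show False using cos_1 by simp
    qed
  next
    case 3
    define q where "q = sqrt (-K)"
    have q: "q > 0" using 3 by (simp add: q_def)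
    have sinh_pos: "sinh (q * s) > 0" using q s by simp
    have pythagoras: "cosh (q * s)^2 = sinh (q * s)^2 + 1" by (rule cosh_square_eq)
    define r where "r = (cosh (q * s) * cosh (q * s) - cosh (q * e)) / (sinh (q * s) * sinh (q * s))"
    have "cosh 0 \<le> cosh (q * e)" using q e by (subst cosh_real_nonneg_le_iff) auto
    then have "r \<le> 1" using sinh_pos pythagoras by (simp add: r_def field_simps power2_eq_square)
    moreover have "cosh (q * e) \<le> cosh (2 * (q * s))"
      using q e by (subst cosh_real_nonneg_le_iff) (auto simp: mult_left_mono)
    then have "-1 \<le> r"
      using sinh_pos pythagoras unfolding cosh_double r_def by (simp add: field_simps power2_eq_square)
    moreover have "arccos r \<le> 0" using angle 3 by (simp add: cmp_angle_def r_def q_def)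
    ultimately have "r = 1" using arccos_nonpos_imp_eq_1 by blast
    then show ?thesis using sinh_pos pythagoras q by (auto simp: r_def field_simps power2_eq_square)
  qed
qed

lemma cmp_defined_if_perimeter_le:
  assumes "a > 0" "b > 0" "a + b + c \<le> 4 * s" and small: "K > 0 \<longrightarrow> 2 * s * sqrt K < pi"
  shows "cmp_defined K a b c"
proof -
  have "K > 0 \<longrightarrow> 4 * s < 2 * pi / sqrt K" using small by (auto simp: field_simps)
  then show ?thesis using assms(1-3) unfolding cmp_defined_def by auto
qed

lemma quadruple_condition_no_branching:
  fixes p u v w :: "'a::metric_space"
  assumes Q: "quadruple_condition K S" and in_S: "p \<in> S" "u \<in> S" "v \<in> S" "w \<in> S"
    and pu: "0 < dist p u" "dist p u \<le> s"
    and pv: "dist p v = s" and pw: "dist p w = s"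
    and uv: "dist u v = dist p u + s" and uw: "dist u w = dist p u + s"
    and small: "K > 0 \<longrightarrow> 2 * s * sqrt K < pi"
  shows "v = w"
proof -
  have s: "s > 0" using pu by linarith
  have vw: "dist v w \<le> 2 * s" using dist_triangle[of v w p] pv pw by (simp add: dist_commute)
  have "K > 0 \<longrightarrow> sqrt K * dist p u < pi \<and> sqrt K * s < pi"
  proof
    assume K: "K > 0"
    moreover have "0 < sqrt K * s" using K s by simp
    ultimately have "sqrt K * s < pi" using small by (simp add: algebra_simps)
    moreover have "sqrt K * dist p u \<le> sqrt K * s" using K pu by simp
    ultimately show "sqrt K * dist p u < pi \<and> sqrt K * s < pi" by linarith
  qed
  then have straight: "cangle K u p v = pi" "cangle K w p u = pi"
    using cmp_angle_straight[of "dist p u" s K] cmp_angle_straight[of s "dist p u" K] pu s pv pw uv uw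
    by (simp_all add: cangle_def dist_commute add.commute)
  have "cangle_defined K u p v" "cangle_defined K v p w" "cangle_defined K w p u"
    unfolding cangle_defined_def using pu s pv pw uv uw vw small
    by (auto intro!: cmp_defined_if_perimeter_le[where s = s] simp: dist_commute)
  then have "cangle K u p v + cangle K v p w + cangle K w p u \<le> 2 * pi"
    using Q in_S unfolding quadruple_condition_def by blast
  then have "cmp_angle K s s (dist v w) \<le> 0" using straight pv pw by (simp add: cangle_def)
  then have "dist v w = 0"
    using cmp_angle_isosceles_nonpos_imp_base_zero[of s "dist v w" K] s vw small by simp
  then show ?thesis by simp
qed

lemma cs_geodesic_dist:
  assumes "cs_geodesic S \<gamma> x y" "s \<in> {0..1}" "r \<in> {0..1}"
  shows "dist (\<gamma> s) (\<gamma> r) = \<bar>s - r\<bar> * dist x y"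
  using assms unfolding cs_geodesic_def by blast

lemma cs_geodesic_in:
  assumes "cs_geodesic S \<gamma> x y" "s \<in> {0..1}"
  shows "\<gamma> s \<in> S"
  using assms unfolding cs_geodesic_def by blast

lemma cs_geodesic_endpoints:
  assumes "cs_geodesic S \<gamma> x y"
  shows "\<gamma> 0 = x" "\<gamma> 1 = y"
  using assms unfolding cs_geodesic_def by auto

lemma cs_geodesic_reverse:
  assumes "cs_geodesic S \<gamma> x y"
  shows "cs_geodesic S (\<lambda>s. \<gamma> (1 - s)) y x"
proof -
  have "1 - s \<in> {0..1}" if "s \<in> {0..1}" for s :: real using that by auto
  then show ?thesis
    using assms unfolding cs_geodesic_def
    by (auto simp: image_subset_iff dist_commute abs_minus_commute)
qed

lemma crossing_cs_geodesics_dist_eq: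
  fixes x1 x2 y1 y2 :: "'a::metric_space"
  assumes hyp: "(dist x1 y1)^2 + (dist x2 y2)^2 \<le> (dist x1 y2)^2 + (dist x2 y1)^2"
    and g1: "cs_geodesic S \<gamma>1 x1 y1" and g2: "cs_geodesic S \<gamma>2 x2 y2"
    and t: "0 < t" "t < 1" and cross: "\<gamma>1 t = \<gamma>2 t"
  shows "dist x2 y2 = dist x1 y1" "dist x1 y2 = dist x1 y1"
proof -
  define a where "a = dist x1 y1"
  define b where "b = dist x2 y2"
  have "dist x1 (\<gamma>1 t) = t * a" "dist (\<gamma>1 t) y1 = (1 - t) * a"
    using cs_geodesic_dist[OF g1, of 0 t] cs_geodesic_dist[OF g1, of t 1] t
    by (simp_all add: cs_geodesic_endpoints[OF g1] a_def)
  moreover have "dist x2 (\<gamma>1 t) = t * b" "dist (\<gamma>1 t) y2 = (1 - t) * b"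
    using cs_geodesic_dist[OF g2, of 0 t] cs_geodesic_dist[OF g2, of t 1] t cross
    by (simp_all add: cs_geodesic_endpoints[OF g2] b_def)
  ultimately have x1y2: "dist x1 y2 \<le> t * a + (1 - t) * b"
    and x2y1: "dist x2 y1 \<le> t * b + (1 - t) * a"
    using dist_triangle[of x1 y2 "\<gamma>1 t"] dist_triangle[of x2 y1 "\<gamma>1 t"] by simp_all
  then have "(dist x1 y2)^2 + (dist x2 y1)^2 \<le> (t * a + (1 - t) * b)^2 + (t * b + (1 - t) * a)^2"
    by (intro add_mono power_mono) auto
  also have "\<dots> = a^2 + b^2 - 2 * (t * (1 - t)) * (a - b)^2"
    by (simp add: power2_eq_square algebra_simps)
  finally have "t * (1 - t) * (a - b)^2 \<le> 0" using hyp by (simp add: a_def b_def)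
  moreover have "t * (1 - t) > 0" using t by simp
  ultimately have ab: "b = a" using t by (auto simp: mult_le_0_iff)
  then have "dist x1 y2 \<le> a" "dist x2 y1 \<le> a" using x1y2 x2y1 by (simp_all add: algebra_simps)
  moreover have "\<not> dist x1 y2 < a"
  proof
    assume "dist x1 y2 < a"
    then have "(dist x1 y2)^2 + (dist x2 y1)^2 < a^2 + b^2"
      using ab \<open>dist x2 y1 \<le> a\<close> by (intro add_strict_right_mono power_strict_mono add_less_le_mono power_mono) auto
    then show False using hyp by (simp add: a_def b_def)
  qed
  ultimately have "dist x1 y2 \<ge> a" by simp
  with \<open>dist x1 y2 \<le> a\<close> show "dist x1 y2 = dist x1 y1" by (simp add: a_def)
  show "dist x2 y2 = dist x1 y1" using ab by (simp add: a_def b_def)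
qed

lemma cs_geodesics_agree_after_common_point:
  fixes x1 x2 y1 y2 :: "'a::metric_space"
  assumes Q: "quadruple_condition K S"
    and g1: "cs_geodesic S \<gamma>1 x1 y1" and g2: "cs_geodesic S \<gamma>2 x2 y2"
    and same_length: "dist x2 y2 = dist x1 y1" and cross_dist: "dist x1 y2 = dist x1 y1"
    and t: "0 < t" and common: "\<gamma>1 t = \<gamma>2 t"
    and e: "0 < e" "t + e \<le> 1" and small: "K > 0 \<longrightarrow> 2 * (e * dist x1 y1) * sqrt K < pi"
  shows "\<gamma>1 (t + e) = \<gamma>2 (t + e)"
proof -
  define a where "a = dist x1 y1"
  have I: "t \<in> {0..1}" "t + e \<in> {0..1}" "0 \<in> {0..(1::real)}" "1 \<in> {0..(1::real)}"
    using t e by auto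
  note d1 = cs_geodesic_dist[OF g1, folded a_def]
  note d2 = cs_geodesic_dist[OF g2, unfolded same_length, folded a_def]
  show ?thesis
  proof (cases "a = 0")
    case True
    then show ?thesis using d1[OF I(2) I(1)] d2[OF I(2) I(1)] common by simp
  next
    case False
    then have a: "a > 0" by (simp add: a_def)
    define d where "d = min e t"
    have d: "0 < d" "d \<le> e" "d \<le> t" using t e by (auto simp: d_def)
    then have Id: "t - d \<in> {0..1}" using I by auto
    define p u v w where "p = \<gamma>1 t" and "u = \<gamma>1 (t - d)"
      and "v = \<gamma>1 (t + e)" and "w = \<gamma>2 (t + e)"
    have pu: "dist p u = d * a" using d1[OF I(1) Id] d by (simp add: p_def u_def)
    have pw: "dist p w = e * a" using d2[OF I(1) I(2)] e common by (simp add: p_def w_def)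
    \<comment> \<open>\<open>\<gamma>1\<close> up to \<open>t\<close> followed by \<open>\<gamma>2\<close> has length \<open>dist x1 y2\<close>, so \<open>u\<close>, \<open>p\<close>, \<open>w\<close> lie on a geodesic.\<close>
    have "a \<le> dist x1 u + dist u w + dist w y2"
      using dist_triangle[of x1 y2 u] dist_triangle[of u y2 w] cross_dist by (simp add: a_def)
    moreover have "dist x1 u = (t - d) * a" "dist w y2 = (1 - t - e) * a"
      using d1[OF I(3) Id] d2[OF I(2) I(4)] d e
      by (simp_all add: u_def w_def cs_geodesic_endpoints[OF g1] cs_geodesic_endpoints[OF g2])
    moreover have "dist u w \<le> dist p u + e * a"
      using dist_triangle[of u w p] pw by (simp add: dist_commute)
    ultimately have uw: "dist u w = dist p u + e * a" using pu by (simp add: algebra_simps)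
    show ?thesis
      unfolding v_def[symmetric] w_def[symmetric]
    proof (rule quadruple_condition_no_branching[OF Q])
      show "p \<in> S" "u \<in> S" "v \<in> S" "w \<in> S"
        using I Id cs_geodesic_in[OF g1] cs_geodesic_in[OF g2] by (auto simp: p_def u_def v_def w_def)
      show "0 < dist p u" "dist p u \<le> e * a" using pu d a by (auto intro: mult_right_mono)
      show "dist p v = e * a" using d1[OF I(1) I(2)] e by (simp add: p_def v_def)
      show "dist u v = dist p u + e * a"
        using d1[OF Id I(2)] pu d e by (simp add: u_def v_def algebra_simps)
    qed (use pw uw small in \<open>simp_all add: a_def\<close>)
  qed
qed

lemma real_step_induct:
  fixes P :: "real \<Rightarrow> bool"
  assumes "P a" and c: "c > 0"
    and step: "\<And>t e. a \<le> t \<Longrightarrow> 0 < e \<Longrightarrow> e \<le> c \<Longrightarrow> t + e \<le> b \<Longrightarrow> P t \<Longrightarrow> P (t + e)"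
    and t: "a \<le> t" "t \<le> b"
  shows "P t"
proof -
  have "\<forall>t. a \<le> t \<and> t \<le> b \<and> t \<le> a + real n * c \<longrightarrow> P t" for n
  proof (induction n)
    case 0
    then show ?case using \<open>P a\<close> by auto
  next
    case (Suc n)
    show ?case
    proof (intro allI impI)
      fix t assume t: "a \<le> t \<and> t \<le> b \<and> t \<le> a + real (Suc n) * c"
      show "P t"
      proof (cases "t \<le> a + real n * c")
        case True
        then show ?thesis using Suc.IH t by blast
      next
        case False
        define t' where "t' = a + real n * c"
        have "P t'" using Suc.IH t c False by (auto simp: t'_def)
        then have "P (t' + (t - t'))"
          using t c False by (intro step) (auto simp: t'_def algebra_simps)
        then show ?thesis by simp
      qed
    qed
  qed
  moreover obtain n where "b - a < real n * c" using reals_Archimedean3[OF c] by blast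
  then have "t \<le> a + real n * c" using t by linarith
  ultimately show ?thesis using t by blast
qed

lemma crossing_cs_geodesics_agree_after:
  fixes x1 x2 y1 y2 :: "'a::metric_space"
  assumes Q: "quadruple_condition K S"
    and hyp: "(dist x1 y1)^2 + (dist x2 y2)^2 \<le> (dist x1 y2)^2 + (dist x2 y1)^2"
    and g1: "cs_geodesic S \<gamma>1 x1 y1" and g2: "cs_geodesic S \<gamma>2 x2 y2"
    and t0: "0 < t0" "t0 < 1" and cross: "\<gamma>1 t0 = \<gamma>2 t0"
    and t: "t0 \<le> t" "t \<le> 1"
  shows "\<gamma>1 t = \<gamma>2 t"
proof -
  define a where "a = dist x1 y1"
  define c where "c = 1 / (1 + a * sqrt \<bar>K\<bar>)"
  have a_sqrt_K: "0 \<le> a * sqrt \<bar>K\<bar>" by (simp add: a_def)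
  then have c: "c > 0" by (simp add: c_def)
  have small: "K > 0 \<longrightarrow> 2 * (e * a) * sqrt K < pi" if "0 < e" "e \<le> c" for e
  proof
    assume "K > 0"
    then have "2 * (e * a) * sqrt K \<le> 2 * (c * a * sqrt \<bar>K\<bar>)"
      using that by (auto simp: a_def intro!: mult_right_mono)
    also have "\<dots> < 2" using a_sqrt_K by (simp add: c_def field_simps)
    finally show "2 * (e * a) * sqrt K < pi" using pi_gt3 by linarith
  qed
  show ?thesis
  proof (rule real_step_induct[where P = "\<lambda>t. \<gamma>1 t = \<gamma>2 t", OF cross c _ t])
    fix s e assume "t0 \<le> s" "0 < e" "e \<le> c" "s + e \<le> 1" "\<gamma>1 s = \<gamma>2 s"
    then show "\<gamma>1 (s + e) = \<gamma>2 (s + e)"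
      using cs_geodesics_agree_after_common_point[OF Q g1 g2
          crossing_cs_geodesics_dist_eq[OF hyp g1 g2 t0 cross]] t0 small
      by (simp add: a_def)
  qed
qed

theorem lemma3p2:
  fixes S :: "'a::metric_space set" and K :: real
    and x1 x2 y1 y2 :: 'a and \<gamma>1 \<gamma>2 :: "real \<Rightarrow> 'a" and t0 :: real
  assumes "alexandrov_space K S"
    and "x1 \<in> S" "x2 \<in> S" "y1 \<in> S" "y2 \<in> S"
    and "(dist x1 y1)^2 + (dist x2 y2)^2 \<le> (dist x1 y2)^2 + (dist x2 y1)^2"
    and "cs_geodesic S \<gamma>1 x1 y1" and "cs_geodesic S \<gamma>2 x2 y2"
    and "t0 \<in> {0<..<1}" and "\<gamma>1 t0 = \<gamma>2 t0"
  shows "\<forall>t\<in>{0..1}. \<gamma>1 t = \<gamma>2 t"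
proof
  fix t :: real assume t: "t \<in> {0..1}"
  have Q: "quadruple_condition K S" using assms(1) by (simp add: alexandrov_space_def)
  have t0: "0 < t0" "t0 < 1" using assms(9) by auto
  show "\<gamma>1 t = \<gamma>2 t"
  proof (cases "t0 \<le> t")
    case True
    then show ?thesis using crossing_cs_geodesics_agree_after[OF Q assms(6-8) t0 assms(10)] t by simp
  next
    case False
    have "(dist y1 x1)^2 + (dist y2 x2)^2 \<le> (dist y1 x2)^2 + (dist y2 x1)^2"
      using assms(6) by (simp add: dist_commute add.commute)
    from crossing_cs_geodesics_agree_after[OF Q this cs_geodesic_reverse[OF assms(7)]
        cs_geodesic_reverse[OF assms(8)], of "1 - t0" "1 - t"]
    show ?thesis using t0 False t assms(10) by simp
  qed
qed

end
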